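(* Let $K^1,K^2$, $\Theta^1,\Theta^2$, $\tau^1,\tau^2$, $\eta^{\{1,2\}}$ and the deterministic functions $\Lambda^{1},\Lambda^{2},\Lambda^{\{1,2\}}$ be as described in the context. Then for all $t_1,t_2,t$ with $0\le t\le \min(t_1,t_2)$, $$ \mathbb P(\tau^1>t_1,\tau^2>t_2\mid\mathcal F_t)= \begin{cases} \exp\left\{-\Lambda^{2}_{t_2}-\left(\Lambda^{\{1,2\}}_{t_1}-\Lambda^{2}_{t_1}\right)\right\}\eta^{\{1,2\}}_t, & \text{if } t_1\le t_2,\\[2pt] \exp\left\{-\Lambda^{1}_{t_1}-\left(\Lambda^{\{1,2\}}_{t_2}-\Lambda^{1}_{t_2}\right)\right\}\eta^{\{1,2\}}_t, & \text{if } t_2< t_1. \end{cases} $$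
   Context: Let $(\Omega,\mathcal G,\mathbb F,\mathbb P)$ be a filtered probability space, $\mathbb F=(\mathcal F_t)_{t\ge0}$ satisfying the usual conditions. For $i=1,2$, let $K^i$ be an $\mathbb F$-adapted, càdlàg, increasing process with $K^i_0=0$ (the processes $K^1,K^2$ may be dependent), and let $\Theta^1,\Theta^2$ be unit exponential random variables, independent of each other and of $\mathcal F_\infty$. Define $\tau^i:=\inf\{t\ge0: K^i_t\ge\Theta^i\}$, so that $\mathbb P(\tau^i>t\mid\mathcal F_t)=e^{-K^i_t}$. Put $K^{\{1,2\}}:=K^1+K^2$. For $J\in\{\{1\},\{2\},\{1,2\}\}$ (writing $K^{\{i\}}=K^i$), let $K^{J,c}$ be the continuous part of $K^J$, let $I^J_t:=\sum_{s\le t}(1-e^{-\Delta K^J_s})$ with canonical decomposition $I^J=M^{I^J}+A^{I^J}$ ($M^{I^J}$ an $\mathbb F$-local martingale, $A^{I^J}$ $\mathbb F$-predictable of finite variation), and set $\Lambda^J:=K^{J,c}+A^{I^J}$. Standing assumptions: for each such $J$, $K^{J,c}$ and $A^{I^J}$ are deterministic, $\Lambda^J$ is continuous (as holds when the associated random times are totally inaccessible), and the multiplicative decomposition $e^{-K^J_t}=\eta^J_t e^{-\Lambda^J_t}$ holds with $\eta^J$ a nonnegative $\mathbb F$-martingale with $\eta^J_0=1$. Here $\Lambda^{i}:=\Lambda^{\{i\}}$, $\eta^i:=\eta^{\{i\}}$. *)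

theory Defs
  imports "HOL-Probability.Probability"
begin

definition usual_filtration :: "'a measure \<Rightarrow> (real \<Rightarrow> 'a measure) \<Rightarrow> bool" where
  "usual_filtration M F \<longleftrightarrow>
     (\<forall>t\<ge>0. subalgebra M (F t)) \<and>
     (\<forall>s t. 0 \<le> s \<longrightarrow> s \<le> t \<longrightarrow> sets (F s) \<subseteq> sets (F t)) \<and>
     (\<forall>t\<ge>0. sets (F t) = (\<Inter>s\<in>{t<..}. sets (F s))) \<and>
     null_sets M \<subseteq> sets (F 0)"

definition F_infty :: "'a measure \<Rightarrow> (real \<Rightarrow> 'a measure) \<Rightarrow> 'a set set" where
  "F_infty M F = sigma_sets (space M) (\<Union>t\<in>{0..}. sets (F t))"

definition adapted :: "(real \<Rightarrow> 'a measure) \<Rightarrow> (real \<Rightarrow> 'a \<Rightarrow> real) \<Rightarrow> bool" where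
  "adapted F X \<longleftrightarrow> (\<forall>t\<ge>0. X t \<in> borel_measurable (F t))"

definition cadlag_increasing_from_0 :: "'a measure \<Rightarrow> (real \<Rightarrow> 'a \<Rightarrow> real) \<Rightarrow> bool" where
  "cadlag_increasing_from_0 M X \<longleftrightarrow>
     (\<forall>\<omega>\<in>space M.
        X 0 \<omega> = 0 \<and>
        (\<forall>s t. 0 \<le> s \<longrightarrow> s \<le> t \<longrightarrow> X s \<omega> \<le> X t \<omega>) \<and>
        (\<forall>t\<ge>0. ((\<lambda>s. X s \<omega>) \<longlongrightarrow> X t \<omega>) (at_right t)) \<and>
        (\<forall>t>0. \<exists>l. ((\<lambda>s. X s \<omega>) \<longlongrightarrow> l) (at_left t)))"

definition martingale :: "'a measure \<Rightarrow> (real \<Rightarrow> 'a measure) \<Rightarrow> (real \<Rightarrow> 'a \<Rightarrow> real) \<Rightarrow> bool" where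
  "martingale M F X \<longleftrightarrow> adapted F X \<and> (\<forall>t\<ge>0. integrable M (X t)) \<and>
     (\<forall>s t. 0 \<le> s \<longrightarrow> s \<le> t \<longrightarrow> (AE \<omega> in M. real_cond_exp M (F s) (X t) \<omega> = X s \<omega>))"

text \<open>Canonical construction tau = inf {t >= 0 : K_t >= Theta}, valued in the extended
  reals (tau = oo if the set is empty).\<close>
definition hit_time :: "(real \<Rightarrow> 'a \<Rightarrow> real) \<Rightarrow> ('a \<Rightarrow> real) \<Rightarrow> 'a \<Rightarrow> ereal" where
  "hit_time K \<Theta> \<omega> = Inf {ereal t | t. 0 \<le> t \<and> \<Theta> \<omega> \<le> K t \<omega>}"

definition mult_decomp ::
  "'a measure \<Rightarrow> (real \<Rightarrow> 'a measure) \<Rightarrow> (real \<Rightarrow> 'a \<Rightarrow> real) \<Rightarrow> (real \<Rightarrow> real) \<Rightarrow> (real \<Rightarrow> 'a \<Rightarrow> real) \<Rightarrow> bool" where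
  "mult_decomp M F K \<Lambda> \<eta> \<longleftrightarrow>
     continuous_on {0..} \<Lambda> \<and>
     martingale M F \<eta> \<and>
     (\<forall>t\<ge>0. \<forall>\<omega>\<in>space M. 0 \<le> \<eta> t \<omega>) \<and>
     (\<forall>\<omega>\<in>space M. \<eta> 0 \<omega> = 1) \<and>
     (AE \<omega> in M. \<forall>t\<ge>0. exp (- K t \<omega>) = \<eta> t \<omega> * exp (- \<Lambda> t))"

end

theory Submission
  imports Defs
begin

text \<open>Conditionally on F_\<infinity> the levels \<Theta>1, \<Theta>2 are independent unit exponentials, and by
  right-continuity of the paths \<tau>i > ti holds exactly when Ki ti < \<Theta>i. Integrating out the levels
  turns P(\<tau>1 > t1, \<tau>2 > t2 | F t) into E[exp (- K1 t1 - K2 t2) | F t].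
  For t1 \<le> t2 the multiplicative decompositions give, almost surely,
  exp (- K1 t1 - K2 t2) = exp (- \<Lambda>2 t2 - (\<Lambda>12 t1 - \<Lambda>2 t1)) * (\<eta>12 t1 / \<eta>2 t1) * \<eta>2 t2.
  The middle factor is F t1-measurable, so the martingale property of \<eta>2 replaces \<eta>2 t2
  by \<eta>2 t1, and then that of \<eta>12 brings \<eta>12 t1 down to \<eta>12 t.
  The case t2 < t1 is the same with the indices exchanged.\<close>

lemma usual_filtration_subalgebra:
  "usual_filtration M F \<Longrightarrow> 0 \<le> t \<Longrightarrow> subalgebra M (F t)"
  unfolding usual_filtration_def by blast

lemma usual_filtration_mono:
  "usual_filtration M F \<Longrightarrow> 0 \<le> s \<Longrightarrow> s \<le> t \<Longrightarrow> sets (F s) \<subseteq> sets (F t)"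
  unfolding usual_filtration_def by blast

lemma adapted_borel_measurable:
  assumes "usual_filtration M F" "adapted F X" "0 \<le> t"
  shows "X t \<in> borel_measurable M"
proof -
  have "subalgebra M (F t)"
    using assms(1,3) by (rule usual_filtration_subalgebra)
  moreover have "X t \<in> borel_measurable (F t)"
    using assms(2,3) by (simp add: adapted_def)
  ultimately show ?thesis
    by (rule measurable_from_subalg)
qed

lemma usual_filtration_sigma_F_infty:
  assumes F: "usual_filtration M F"
  shows "sets (sigma (space M) (F_infty M F)) = F_infty M F"
    and "subalgebra M (sigma (space M) (F_infty M F))"
    and "0 \<le> t \<Longrightarrow> subalgebra (sigma (space M) (F_infty M F)) (F t)"
proof -
  have gen: "(\<Union>t\<in>{0..}. sets (F t)) \<subseteq> sets M"
    using usual_filtration_subalgebra[OF F] by (auto simp: subalgebra_def)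
  then have F_infty_M: "F_infty M F \<subseteq> sets M"
    unfolding F_infty_def by (rule sets.sigma_sets_subset)
  have "sets (sigma (space M) (F_infty M F)) = sigma_sets (space M) (F_infty M F)"
    using F_infty_M sets.space_closed by (intro sets_measure_of) blast
  also have "\<dots> = F_infty M F"
    unfolding F_infty_def using gen sets.space_closed by (intro sigma_sets_sigma_sets_eq) blast
  finally show sets_eq: "sets (sigma (space M) (F_infty M F)) = F_infty M F" .
  show "subalgebra M (sigma (space M) (F_infty M F))"
    using F_infty_M by (simp add: subalgebra_def sets_eq space_measure_of_conv)
  show "subalgebra (sigma (space M) (F_infty M F)) (F t)" if "0 \<le> t"
    using usual_filtration_subalgebra[OF F that] that unfolding subalgebra_def sets_eq
    by (auto simp: F_infty_def space_measure_of_conv)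
qed

lemma prob_space_sigma_finite_subalgebra:
  assumes "prob_space M" and "subalgebra M N"
  shows "sigma_finite_subalgebra M N"
proof -
  interpret prob_space M by fact
  show ?thesis
    by (intro finite_measure_subalgebra_is_sigma_finite finite_measure_subalgebra.intro
        finite_measure_subalgebra_axioms.intro) (fact finite_measure_axioms assms)+
qed

lemma cadlag_increasing_from_0_nonneg:
  "cadlag_increasing_from_0 M K \<Longrightarrow> \<omega> \<in> space M \<Longrightarrow> 0 \<le> t \<Longrightarrow> 0 \<le> K t \<omega>"
  unfolding cadlag_increasing_from_0_def by (metis order_refl)

lemma hit_time_gt_iff:
  assumes K: "cadlag_increasing_from_0 M K" and "\<omega> \<in> space M" and "0 \<le> t"
  shows "ereal t < hit_time K \<Theta> \<omega> \<longleftrightarrow> K t \<omega> < \<Theta> \<omega>"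
proof
  assume "ereal t < hit_time K \<Theta> \<omega>"
  show "K t \<omega> < \<Theta> \<omega>"
  proof (rule ccontr)
    assume "\<not> K t \<omega> < \<Theta> \<omega>"
    then have "hit_time K \<Theta> \<omega> \<le> ereal t"
      using \<open>0 \<le> t\<close> unfolding hit_time_def by (intro Inf_lower) auto
    with \<open>ereal t < hit_time K \<Theta> \<omega>\<close> show False
      by simp
  qed
next
  assume below_t: "K t \<omega> < \<Theta> \<omega>"
  have mono: "K s \<omega> \<le> K t \<omega>" if "0 \<le> s" "s \<le> t" for s
    using K \<open>\<omega> \<in> space M\<close> that unfolding cadlag_increasing_from_0_def by blast
  have "((\<lambda>s. K s \<omega>) \<longlongrightarrow> K t \<omega>) (at_right t)"
    using K \<open>\<omega> \<in> space M\<close> \<open>0 \<le> t\<close> unfolding cadlag_increasing_from_0_def by blast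
  then have "eventually (\<lambda>s. K s \<omega> < \<Theta> \<omega>) (at_right t)"
    using below_t by (rule order_tendstoD(2))
  then obtain b where "t < b" and below_b: "\<And>s. t < s \<Longrightarrow> s < b \<Longrightarrow> K s \<omega> < \<Theta> \<omega>"
    unfolding eventually_at_right_field by blast
  have "ereal t < ereal b"
    using \<open>t < b\<close> by simp
  also have "ereal b \<le> hit_time K \<Theta> \<omega>"
    unfolding hit_time_def
  proof (rule Inf_greatest, clarify)
    fix s assume "0 \<le> s" "\<Theta> \<omega> \<le> K s \<omega>"
    then have "\<not> s \<le> t" and "\<not> (t < s \<and> s < b)"
      using mono below_t below_b by force+
    then show "ereal b \<le> ereal s"
      by simp
  qed
  finally show "ereal t < hit_time K \<Theta> \<omega>" .
qed

lemma (in finite_measure) integrable_exp_minus_nonneg: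
  fixes X Y :: "'a \<Rightarrow> real"
  assumes [measurable]: "X \<in> borel_measurable M" "Y \<in> borel_measurable M"
    and "\<And>\<omega>. \<omega> \<in> space M \<Longrightarrow> 0 \<le> X \<omega>" and "\<And>\<omega>. \<omega> \<in> space M \<Longrightarrow> 0 \<le> Y \<omega>"
  shows "integrable M (\<lambda>\<omega>. exp (- X \<omega> - Y \<omega>))"
proof -
  have "norm (exp (- X \<omega> - Y \<omega>)) \<le> 1" if "\<omega> \<in> space M" for \<omega>
    using assms(3,4)[OF that] by simp
  then show ?thesis
    by (intro integrable_const_bound[where B=1] AE_I2) simp_all
qed

lemma Int_stable_vimage_sets: "Int_stable {X -` A \<inter> \<Omega> | A. A \<in> sets S}"
proof (rule Int_stableI, clarify)
  fix A B assume "A \<in> sets S" "B \<in> sets S"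
  then show "\<exists>C. (X -` A \<inter> \<Omega>) \<inter> (X -` B \<inter> \<Omega>) = X -` C \<inter> \<Omega> \<and> C \<in> sets S"
    by (intro exI[of _ "A \<inter> B"]) auto
qed

lemma (in prob_space) indep_set_sigma_collect:
  assumes indep: "indep_sets E I" and stable: "\<And>i. i \<in> I \<Longrightarrow> Int_stable (E i)"
    and "J \<subseteq> I" "K \<subseteq> I" "J \<inter> K = {}"
  shows "indep_set (sigma_sets (space M) (\<Union>i\<in>J. E i)) (sigma_sets (space M) (\<Union>i\<in>K. E i))"
proof -
  have "indep_sets (\<lambda>b. sigma_sets (space M) (\<Union>i\<in>case_bool J K b. E i)) UNIV"
  proof (rule indep_sets_collect_sigma)
    have "(\<Union>b. case_bool J K b) \<subseteq> I"
      using assms by (auto split: bool.splits)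
    then show "indep_sets E (\<Union>b. case_bool J K b)"
      using indep by (rule indep_sets_mono_index)
    show "disjoint_family (case_bool J K)"
      using assms by (auto simp: disjoint_family_on_def split: bool.split)
  qed (use stable assms in \<open>auto split: bool.splits\<close>)
  then show ?thesis
    unfolding indep_set_def by (rule indep_sets_mono_sets) (auto split: bool.split)
qed

lemma (in prob_space) indep_var_of_indep_subalgebras:
  assumes N1: "subalgebra M N1" and N2: "subalgebra M N2"
    and indep: "indep_set (sets N1) (sets N2)"
    and X: "X \<in> measurable N1 S" and Y: "Y \<in> measurable N2 T"
  shows "indep_var S X T Y"
  unfolding indep_var_eq
proof (intro conjI)
  show "random_variable S X" "random_variable T Y"
    using measurable_from_subalg[OF N1 X] measurable_from_subalg[OF N2 Y] .
  have "sigma_sets (space M) {X -` A \<inter> space M | A. A \<in> sets S} \<subseteq> sets N1"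
    using X N1 sets.top[of N1] by (intro sets.sigma_sets_subset') (auto simp: subalgebra_def dest: measurable_sets)
  moreover have "sigma_sets (space M) {Y -` A \<inter> space M | A. A \<in> sets T} \<subseteq> sets N2"
    using Y N2 sets.top[of N2] by (intro sets.sigma_sets_subset') (auto simp: subalgebra_def dest: measurable_sets)
  ultimately show "indep_set (sigma_sets (space M) {X -` A \<inter> space M | A. A \<in> sets S})
      (sigma_sets (space M) {Y -` A \<inter> space M | A. A \<in> sets T})"
    using indep unfolding indep_set_def by (elim indep_sets_mono_sets) (auto split: bool.split)
qed

lemma (in prob_space) nn_integral_cmult_exponential_tail:
  assumes "distributed M lborel \<Theta> (exponential_density 1)" and "0 \<le> y"
  shows "(\<integral>\<^sup>+\<omega>. x * indicator {\<omega> \<in> space M. y < \<Theta> \<omega>} \<omega> \<partial>M) = x * ennreal (exp (- y))"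
proof -
  have "{\<omega> \<in> space M. y < \<Theta> \<omega>} \<in> events"
    using distributed_measurable[OF assms(1)] by measurable
  then show ?thesis
    using exponential_distributedD_gt[OF assms] by (simp add: nn_integral_cmult_indicator emeasure_eq_measure)
qed

lemma (in prob_space) nn_integral_indicator_less_exponential:
  assumes N: "subalgebra M N"
    and \<Theta>: "distributed M lborel \<Theta> (exponential_density 1)"
    and indep: "indep_set (sets N) {\<Theta> -` A \<inter> space M | A. A \<in> sets borel}"
    and g: "g \<in> borel_measurable N" and X: "X \<in> borel_measurable N"
    and X_nonneg: "\<And>\<omega>. \<omega> \<in> space M \<Longrightarrow> 0 \<le> X \<omega>"
  shows "(\<integral>\<^sup>+\<omega>. g \<omega> * indicator {\<omega> \<in> space M. X \<omega> < \<Theta> \<omega>} \<omega> \<partial>M)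
       = (\<integral>\<^sup>+\<omega>. g \<omega> * ennreal (exp (- X \<omega>)) \<partial>M)"
proof -
  let ?S = "borel \<Otimes>\<^sub>M borel :: (ennreal \<times> real) measure"
  \<comment> \<open>indep_var needs both variables in one type, hence the dummy first component of ?W\<close>
  let ?V = "\<lambda>\<omega>. (g \<omega>, X \<omega>)" and ?W = "\<lambda>\<omega>. (0 :: ennreal, \<Theta> \<omega>)"
  define f :: "(ennreal \<times> real) \<times> (ennreal \<times> real) \<Rightarrow> ennreal"
    where "f p = (if snd (fst p) < snd (snd p) then fst (fst p) else 0)" for p
  have [measurable]: "f \<in> borel_measurable (?S \<Otimes>\<^sub>M ?S)"
    unfolding f_def by measurable
  let ?N\<Theta> = "vimage_algebra (space M) \<Theta> borel"
  have \<Theta>_M[measurable]: "\<Theta> \<in> borel_measurable M"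
    using distributed_measurable[OF \<Theta>] by simp
  have V_N: "?V \<in> measurable N ?S"
    using g X by measurable
  have W_N\<Theta>: "?W \<in> measurable ?N\<Theta> ?S"
    using measurable_vimage_algebra1[of \<Theta> "space M" borel] by measurable
  have N\<Theta>: "subalgebra M ?N\<Theta>"
    using \<Theta>_M by (auto simp: subalgebra_def sets_vimage_algebra2 dest: measurable_sets)
  have "indep_var ?S ?V ?S ?W"
    using indep by (intro indep_var_of_indep_subalgebras[OF N N\<Theta> _ V_N W_N\<Theta>]) (simp add: sets_vimage_algebra2)
  then have joint: "distr M (?S \<Otimes>\<^sub>M ?S) (\<lambda>\<omega>. (?V \<omega>, ?W \<omega>)) = distr M ?S ?V \<Otimes>\<^sub>M distr M ?S ?W"
    by (simp add: indep_var_distribution_eq)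
  have [measurable]: "?V \<in> measurable M ?S"
    using measurable_from_subalg[OF N V_N] .
  interpret W: prob_space "distr M ?S ?W"
    by (rule prob_space_distr) simp
  have tail: "(\<integral>\<^sup>+w. f ((x, y), w) \<partial>distr M ?S ?W) = x * ennreal (exp (- y))" if "0 \<le> y" for x y
    unfolding nn_integral_cmult_exponential_tail[OF \<Theta> that, symmetric]
    by (simp add: nn_integral_distr) (intro nn_integral_cong, simp add: f_def indicator_def)
  have "(\<integral>\<^sup>+\<omega>. g \<omega> * indicator {\<omega> \<in> space M. X \<omega> < \<Theta> \<omega>} \<omega> \<partial>M) = (\<integral>\<^sup>+\<omega>. f (?V \<omega>, ?W \<omega>) \<partial>M)"
    by (intro nn_integral_cong) (simp add: f_def indicator_def)
  also have "\<dots> = (\<integral>\<^sup>+p. f p \<partial>(distr M ?S ?V \<Otimes>\<^sub>M distr M ?S ?W))"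
    unfolding joint[symmetric] by (subst nn_integral_distr) simp_all
  also have "\<dots> = (\<integral>\<^sup>+v. \<integral>\<^sup>+w. f (v, w) \<partial>distr M ?S ?W \<partial>distr M ?S ?V)"
    by (rule W.nn_integral_fst[symmetric]) simp
  also have "\<dots> = (\<integral>\<^sup>+\<omega>. \<integral>\<^sup>+w. f (?V \<omega>, w) \<partial>distr M ?S ?W \<partial>M)"
    by (simp add: nn_integral_distr)
  also have "\<dots> = (\<integral>\<^sup>+\<omega>. g \<omega> * ennreal (exp (- X \<omega>)) \<partial>M)"
    using X_nonneg by (intro nn_integral_cong tail) auto
  finally show ?thesis .
qed

lemma (in prob_space) indep_sets_three_sigma:
  fixes E0 E1 E2 :: "'a set set"
  assumes indep: "indep_sets (\<lambda>i::nat. if i = 0 then E0 else if i = 1 then E1 else E2) {0, 1, 2}"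
    and "Int_stable E0" and "Int_stable E1" and "Int_stable E2"
  shows "indep_set (sigma_sets (space M) E0) (sigma_sets (space M) E1)"
    and "indep_set (sigma_sets (space M) (E0 \<union> E1)) (sigma_sets (space M) E2)"
proof -
  have stable: "Int_stable (if i = 0 then E0 else if i = 1 then E1 else E2)" for i :: nat
    using assms(2-4) by simp
  show "indep_set (sigma_sets (space M) E0) (sigma_sets (space M) E1)"
    using indep_set_sigma_collect[OF indep stable, of "{0}" "{1}"] by simp
  show "indep_set (sigma_sets (space M) (E0 \<union> E1)) (sigma_sets (space M) E2)"
    using indep_set_sigma_collect[OF indep stable, of "{0, 1}" "{2}"] by (simp add: Un_commute)
qed

lemma subalgebra_sigma_Un:
  assumes N: "subalgebra M N" and E: "E \<subseteq> sets M"
  shows "sets (sigma (space M) (sets N \<union> E)) = sigma_sets (space M) (sets N \<union> E)"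
    and "subalgebra M (sigma (space M) (sets N \<union> E))"
    and "subalgebra (sigma (space M) (sets N \<union> E)) N"
    and "space (sigma (space M) (sets N \<union> E)) = space M"
proof -
  have N_M: "sets N \<subseteq> sets M" "space N = space M"
    using N by (auto simp: subalgebra_def)
  then show sets_eq: "sets (sigma (space M) (sets N \<union> E)) = sigma_sets (space M) (sets N \<union> E)"
    using E sets.space_closed[of M] by (intro sets_measure_of) blast
  show "space (sigma (space M) (sets N \<union> E)) = space M"
    by (simp add: space_measure_of_conv)
  then show "subalgebra M (sigma (space M) (sets N \<union> E))" "subalgebra (sigma (space M) (sets N \<union> E)) N"
    using N_M E by (auto simp: subalgebra_def sets_eq intro!: sets.sigma_sets_subset)
qed

lemma (in prob_space) nn_integral_indicator_less_two_exponentials: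
  fixes \<Theta>1 \<Theta>2 X1 X2 :: "'a \<Rightarrow> real"
  assumes N: "subalgebra M N"
    and \<Theta>1: "distributed M lborel \<Theta>1 (exponential_density 1)"
    and \<Theta>2: "distributed M lborel \<Theta>2 (exponential_density 1)"
    and indep: "indep_sets (\<lambda>i::nat. if i = 0 then sets N
                     else if i = 1 then {\<Theta>1 -` A \<inter> space M | A. A \<in> sets borel}
                     else {\<Theta>2 -` A \<inter> space M | A. A \<in> sets borel}) {0, 1, 2}"
    and [measurable]: "g \<in> borel_measurable N" "X1 \<in> borel_measurable N" "X2 \<in> borel_measurable N"
    and X1_nonneg: "\<And>\<omega>. \<omega> \<in> space M \<Longrightarrow> 0 \<le> X1 \<omega>"
    and X2_nonneg: "\<And>\<omega>. \<omega> \<in> space M \<Longrightarrow> 0 \<le> X2 \<omega>"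
  shows "(\<integral>\<^sup>+\<omega>. g \<omega> * indicator {\<omega> \<in> space M. X1 \<omega> < \<Theta>1 \<omega> \<and> X2 \<omega> < \<Theta>2 \<omega>} \<omega> \<partial>M)
       = (\<integral>\<^sup>+\<omega>. g \<omega> * ennreal (exp (- X1 \<omega> - X2 \<omega>)) \<partial>M)"
proof -
  let ?E1 = "{\<Theta>1 -` A \<inter> space M | A. A \<in> sets borel}"
  let ?E2 = "{\<Theta>2 -` A \<inter> space M | A. A \<in> sets borel}"
  have space_N: "space N = space M"
    using N by (auto simp: subalgebra_def)
  have E1_M: "?E1 \<subseteq> sets M"
    using distributed_measurable[OF \<Theta>1] by (auto dest: measurable_sets)
  have "Int_stable (sets N)"
    by (auto simp: Int_stable_def)
  note indep_sigma = indep_sets_three_sigma[OF indep this Int_stable_vimage_sets Int_stable_vimage_sets]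
  have indep1: "indep_set (sets N) ?E1"
    using indep_sigma(1) sets.sigma_sets_eq[of N] unfolding indep_set_def
    by (elim indep_sets_mono_sets) (auto simp: space_N split: bool.split)
  define N1 where "N1 = sigma (space M) (sets N \<union> ?E1)"
  note N1 = subalgebra_sigma_Un[OF N E1_M, folded N1_def]
  have indep2: "indep_set (sets N1) ?E2"
    using indep_sigma(2) unfolding indep_set_def
    by (elim indep_sets_mono_sets) (auto simp: N1(1) split: bool.split)
  have [measurable]: "g \<in> borel_measurable N1" "X1 \<in> borel_measurable N1" "X2 \<in> borel_measurable N1"
    using N1(3) by (auto intro: measurable_from_subalg)
  have [measurable]: "\<Theta>1 \<in> borel_measurable N1"
    by (rule measurableI) (auto simp: N1(1,4))
  have "{\<omega> \<in> space N1. X1 \<omega> < \<Theta>1 \<omega>} \<in> sets N1"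
    by measurable
  then have [measurable]: "{\<omega> \<in> space M. X1 \<omega> < \<Theta>1 \<omega>} \<in> sets N1"
    by (simp only: N1(4))
  have "(\<integral>\<^sup>+\<omega>. g \<omega> * indicator {\<omega> \<in> space M. X1 \<omega> < \<Theta>1 \<omega> \<and> X2 \<omega> < \<Theta>2 \<omega>} \<omega> \<partial>M)
      = (\<integral>\<^sup>+\<omega>. (g \<omega> * indicator {\<omega> \<in> space M. X1 \<omega> < \<Theta>1 \<omega>} \<omega>) * indicator {\<omega> \<in> space M. X2 \<omega> < \<Theta>2 \<omega>} \<omega> \<partial>M)"
    by (intro nn_integral_cong) (simp add: indicator_def)
  also have "\<dots> = (\<integral>\<^sup>+\<omega>. (g \<omega> * indicator {\<omega> \<in> space M. X1 \<omega> < \<Theta>1 \<omega>} \<omega>) * ennreal (exp (- X2 \<omega>)) \<partial>M)"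
    using N1(2) \<Theta>2 indep2 by (rule nn_integral_indicator_less_exponential) (auto simp: X2_nonneg)
  also have "\<dots> = (\<integral>\<^sup>+\<omega>. (g \<omega> * ennreal (exp (- X2 \<omega>))) * indicator {\<omega> \<in> space M. X1 \<omega> < \<Theta>1 \<omega>} \<omega> \<partial>M)"
    by (simp add: ac_simps)
  also have "\<dots> = (\<integral>\<^sup>+\<omega>. (g \<omega> * ennreal (exp (- X2 \<omega>))) * ennreal (exp (- X1 \<omega>)) \<partial>M)"
    using N \<Theta>1 indep1 by (rule nn_integral_indicator_less_exponential) (auto simp: X1_nonneg)
  also have "\<dots> = (\<integral>\<^sup>+\<omega>. g \<omega> * ennreal (exp (- X1 \<omega> - X2 \<omega>)) \<partial>M)"
    by (simp add: ennreal_mult'[symmetric] mult.assoc mult_exp_exp add.commute)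
  finally show ?thesis .
qed

lemma (in prob_space) real_cond_exp_indicator_less_two_exponentials:
  fixes \<Theta>1 \<Theta>2 X1 X2 :: "'a \<Rightarrow> real"
  assumes N: "subalgebra M N" and G: "subalgebra N G"
    and \<Theta>1: "distributed M lborel \<Theta>1 (exponential_density 1)"
    and \<Theta>2: "distributed M lborel \<Theta>2 (exponential_density 1)"
    and indep: "indep_sets (\<lambda>i::nat. if i = 0 then sets N
                     else if i = 1 then {\<Theta>1 -` A \<inter> space M | A. A \<in> sets borel}
                     else {\<Theta>2 -` A \<inter> space M | A. A \<in> sets borel}) {0, 1, 2}"
    and X1: "X1 \<in> borel_measurable N" and X2: "X2 \<in> borel_measurable N"
    and X1_nonneg: "\<And>\<omega>. \<omega> \<in> space M \<Longrightarrow> 0 \<le> X1 \<omega>"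
    and X2_nonneg: "\<And>\<omega>. \<omega> \<in> space M \<Longrightarrow> 0 \<le> X2 \<omega>"
  shows "AE \<omega> in M.
           real_cond_exp M G (indicator {\<omega> \<in> space M. X1 \<omega> < \<Theta>1 \<omega> \<and> X2 \<omega> < \<Theta>2 \<omega>}) \<omega>
         = real_cond_exp M G (\<lambda>\<omega>. exp (- X1 \<omega> - X2 \<omega>)) \<omega>"
proof -
  let ?S = "{\<omega> \<in> space M. X1 \<omega> < \<Theta>1 \<omega> \<and> X2 \<omega> < \<Theta>2 \<omega>}"
  let ?Z = "\<lambda>\<omega>. exp (- X1 \<omega> - X2 \<omega>)"
  have G_M: "subalgebra M G"
    using N G by (auto simp: subalgebra_def)
  interpret G: sigma_finite_subalgebra M G
    by (rule prob_space_sigma_finite_subalgebra[OF prob_space_axioms G_M])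
  have [measurable]: "X1 \<in> borel_measurable M" "X2 \<in> borel_measurable M"
    using measurable_from_subalg[OF N X1] measurable_from_subalg[OF N X2] .
  have [measurable]: "\<Theta>1 \<in> borel_measurable M" "\<Theta>2 \<in> borel_measurable M"
    using distributed_measurable[OF \<Theta>1] distributed_measurable[OF \<Theta>2] by simp_all
  have Z_int: "integrable M ?Z"
    using X1_nonneg X2_nonneg by (intro integrable_exp_minus_nonneg) simp_all
  show ?thesis
  proof (rule G.real_cond_exp_charact)
    fix A assume A: "A \<in> sets G"
    then have [measurable]: "A \<in> sets M" "A \<in> sets N"
      using G G_M by (auto simp: subalgebra_def)
    have "(\<integral>\<omega>\<in>A. indicator ?S \<omega> \<partial>M) = enn2real (\<integral>\<^sup>+\<omega>. indicator A \<omega> * indicator ?S \<omega> \<partial>M)"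
      by (simp add: set_lebesgue_integral_def integral_eq_nn_integral ennreal_mult' ennreal_indicator)
    also have "\<dots> = enn2real (\<integral>\<^sup>+\<omega>. indicator A \<omega> * ennreal (?Z \<omega>) \<partial>M)"
      using N \<Theta>1 \<Theta>2 indep _ X1 X2 X1_nonneg X2_nonneg
      by (subst nn_integral_indicator_less_two_exponentials) auto
    also have "\<dots> = (\<integral>\<omega>. indicator A \<omega> * ?Z \<omega> \<partial>M)"
      by (simp add: integral_eq_nn_integral ennreal_mult' ennreal_indicator)
    also have "\<dots> = (\<integral>\<omega>. indicator A \<omega> * real_cond_exp M G ?Z \<omega> \<partial>M)"
      using integrable_mult_indicator[OF _ Z_int, of A] A by (intro G.real_cond_exp_intg(2)[symmetric]) auto
    also have "\<dots> = (\<integral>\<omega>\<in>A. real_cond_exp M G ?Z \<omega> \<partial>M)"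
      by (simp add: set_lebesgue_integral_def)
    finally show "(\<integral>\<omega>\<in>A. indicator ?S \<omega> \<partial>M) = (\<integral>\<omega>\<in>A. real_cond_exp M G ?Z \<omega> \<partial>M)" .
  qed (use Z_int in \<open>auto simp: less_top[symmetric]\<close>)
qed

lemma mult_decomp_AE_eq_exp:
  assumes "mult_decomp M F K \<Lambda> \<eta>"
  shows "AE \<omega> in M. \<forall>s\<ge>0. \<eta> s \<omega> = exp (\<Lambda> s - K s \<omega>)"
proof -
  have "AE \<omega> in M. \<forall>s\<ge>0. exp (- K s \<omega>) = \<eta> s \<omega> * exp (- \<Lambda> s)"
    using assms by (simp add: mult_decomp_def)
  then show ?thesis
    by eventually_elim (simp add: exp_diff exp_minus field_simps)
qed

lemma martingale_borel_measurable:
  "martingale M F X \<Longrightarrow> 0 \<le> t \<Longrightarrow> X t \<in> borel_measurable M"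
  by (simp add: martingale_def borel_measurable_integrable)

lemma martingale_integral_mult_measurable:
  assumes "prob_space M" and "subalgebra M (F s)" and mart: "martingale M F X"
    and "0 \<le> s" "s \<le> r" and [measurable]: "h \<in> borel_measurable (F s)"
    and int: "integrable M (\<lambda>\<omega>. h \<omega> * X r \<omega>)"
  shows "(\<integral>\<omega>. h \<omega> * X r \<omega> \<partial>M) = (\<integral>\<omega>. h \<omega> * X s \<omega> \<partial>M)"
proof -
  interpret sigma_finite_subalgebra M "F s"
    by (rule prob_space_sigma_finite_subalgebra) fact+
  have [measurable]: "X r \<in> borel_measurable M" "X s \<in> borel_measurable M"
    using mart \<open>0 \<le> s\<close> \<open>s \<le> r\<close> by (simp_all add: martingale_borel_measurable)
  have [measurable]: "h \<in> borel_measurable M"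
    by (rule measurable_from_subalg[OF subalg]) simp
  have "AE \<omega> in M. real_cond_exp M (F s) (X r) \<omega> = X s \<omega>"
    using mart \<open>0 \<le> s\<close> \<open>s \<le> r\<close> by (simp add: martingale_def)
  then have "(\<integral>\<omega>. h \<omega> * real_cond_exp M (F s) (X r) \<omega> \<partial>M) = (\<integral>\<omega>. h \<omega> * X s \<omega> \<partial>M)"
    by (intro integral_cong_AE) auto
  then show ?thesis
    using real_cond_exp_intg(2)[OF int] by simp
qed

lemma mult_decomp_AE_factorization:
  assumes "mult_decomp M F Kb \<Lambda>b \<eta>b" and "mult_decomp M F (\<lambda>s \<omega>. Ka s \<omega> + Kb s \<omega>) \<Lambda>ab \<eta>ab"
    and "0 \<le> a" and "0 \<le> b"
  shows "AE \<omega> in M.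
      exp (- Ka a \<omega> - Kb b \<omega>) = exp (- \<Lambda>b b - (\<Lambda>ab a - \<Lambda>b a)) * (exp (\<Lambda>ab a - \<Lambda>b a - Ka a \<omega>) * \<eta>b b \<omega>)
    \<and> exp (\<Lambda>ab a - \<Lambda>b a - Ka a \<omega>) * \<eta>b a \<omega> = \<eta>ab a \<omega>"
  using mult_decomp_AE_eq_exp[OF assms(1)] mult_decomp_AE_eq_exp[OF assms(2)]
proof eventually_elim
  case (elim \<omega>)
  then have \<eta>_eq: "\<eta>b a \<omega> = exp (\<Lambda>b a - Kb a \<omega>)" "\<eta>b b \<omega> = exp (\<Lambda>b b - Kb b \<omega>)"
    "\<eta>ab a \<omega> = exp (\<Lambda>ab a - (Ka a \<omega> + Kb a \<omega>))"
    using \<open>0 \<le> a\<close> \<open>0 \<le> b\<close> by simp_all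
  show ?case
    unfolding \<eta>_eq mult_exp_exp by (intro conjI arg_cong[where f = exp]) linarith+
qed

lemma martingale_set_integral_eq:
  assumes "prob_space M" and "subalgebra M (F s)" and mart: "martingale M F X"
    and "0 \<le> s" and "s \<le> r" and G: "G \<in> sets (F s)"
  shows "(\<integral>\<omega>\<in>G. X r \<omega> \<partial>M) = (\<integral>\<omega>\<in>G. X s \<omega> \<partial>M)"
proof -
  have "G \<in> sets M"
    using assms(2) G by (auto simp: subalgebra_def)
  moreover have "integrable M (X r)"
    using mart \<open>0 \<le> s\<close> \<open>s \<le> r\<close> by (simp add: martingale_def)
  ultimately have "integrable M (\<lambda>\<omega>. indicator G \<omega> * X r \<omega>)"
    using integrable_mult_indicator[of G M "X r"] by simp
  then show ?thesis
    unfolding set_lebesgue_integral_def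
    using martingale_integral_mult_measurable[OF assms(1-5)] G by simp
qed

lemma set_integral_exp_mult_decomp:
  fixes Ka Kb :: "real \<Rightarrow> 'a \<Rightarrow> real"
  assumes M: "prob_space M" and F: "usual_filtration M F"
    and "adapted F Ka" and "adapted F Kb"
    and Ka_nonneg: "\<And>s \<omega>. 0 \<le> s \<Longrightarrow> \<omega> \<in> space M \<Longrightarrow> 0 \<le> Ka s \<omega>"
    and Kb_nonneg: "\<And>s \<omega>. 0 \<le> s \<Longrightarrow> \<omega> \<in> space M \<Longrightarrow> 0 \<le> Kb s \<omega>"
    and Db: "mult_decomp M F Kb \<Lambda>b \<eta>b"
    and Dab: "mult_decomp M F (\<lambda>s \<omega>. Ka s \<omega> + Kb s \<omega>) \<Lambda>ab \<eta>ab"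
    and "0 \<le> a" and "a \<le> b" and G: "G \<in> sets (F a)"
  shows "(\<integral>\<omega>\<in>G. exp (- Ka a \<omega> - Kb b \<omega>) \<partial>M) = (\<integral>\<omega>\<in>G. exp (- \<Lambda>b b - (\<Lambda>ab a - \<Lambda>b a)) * \<eta>ab a \<omega> \<partial>M)"
proof -
  interpret prob_space M by (fact M)
  define c where "c = exp (- \<Lambda>b b - (\<Lambda>ab a - \<Lambda>b a))"
  \<comment> \<open>a.e. equal to \<eta>ab a / \<eta>b a, but visibly F a-measurable\<close>
  define k where "k \<omega> = exp (\<Lambda>ab a - \<Lambda>b a - Ka a \<omega>)" for \<omega>
  have "0 \<le> b"
    using \<open>0 \<le> a\<close> \<open>a \<le> b\<close> by simp
  have sub: "subalgebra M (F a)"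
    using F \<open>0 \<le> a\<close> by (rule usual_filtration_subalgebra)
  have mart: "martingale M F \<eta>b" "martingale M F \<eta>ab"
    using Db Dab by (simp_all add: mult_decomp_def)
  have [measurable]: "G \<in> sets (F a)" "G \<in> sets M"
    using G sub by (auto simp: subalgebra_def)
  have "Ka a \<in> borel_measurable (F a)"
    using assms(3) \<open>0 \<le> a\<close> by (simp add: adapted_def)
  then have [measurable]: "k \<in> borel_measurable (F a)"
    unfolding k_def by measurable
  then have [measurable]: "k \<in> borel_measurable M"
    by (rule measurable_from_subalg[OF sub])
  have [measurable]: "Ka a \<in> borel_measurable M" "Kb b \<in> borel_measurable M"
    using assms(3,4) F \<open>0 \<le> a\<close> \<open>0 \<le> b\<close> by (simp_all add: adapted_borel_measurable)
  have [measurable]: "\<eta>b a \<in> borel_measurable M" "\<eta>b b \<in> borel_measurable M" "\<eta>ab a \<in> borel_measurable M"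
    using mart \<open>0 \<le> a\<close> \<open>0 \<le> b\<close> by (simp_all add: martingale_borel_measurable)
  note factorization = mult_decomp_AE_factorization[OF Db Dab \<open>0 \<le> a\<close> \<open>0 \<le> b\<close>, folded c_def k_def]
  have Z_eq: "AE \<omega> in M. indicator G \<omega> * exp (- Ka a \<omega> - Kb b \<omega>) = c * ((indicator G \<omega> * k \<omega>) * \<eta>b b \<omega>)"
    using factorization by (rule eventually_mono) (simp add: ac_simps)
  have k_eq: "AE \<omega> in M. (indicator G \<omega> * k \<omega>) * \<eta>b a \<omega> = indicator G \<omega> * \<eta>ab a \<omega>"
    using factorization by (rule eventually_mono) (simp add: ac_simps)
  have "integrable M (\<lambda>\<omega>. exp (- Ka a \<omega> - Kb b \<omega>))"
    using Ka_nonneg[OF \<open>0 \<le> a\<close>] Kb_nonneg[OF \<open>0 \<le> b\<close>] by (intro integrable_exp_minus_nonneg) simp_all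
  from integrable_mult_indicator[OF \<open>G \<in> sets M\<close> this]
  have "integrable M (\<lambda>\<omega>. c * ((indicator G \<omega> * k \<omega>) * \<eta>b b \<omega>))"
    by (intro integrable_cong_AE_imp[OF _ _ Z_eq]) simp_all
  then have kb_int: "integrable M (\<lambda>\<omega>. (indicator G \<omega> * k \<omega>) * \<eta>b b \<omega>)"
    by (simp add: c_def)
  have "(\<integral>\<omega>\<in>G. exp (- Ka a \<omega> - Kb b \<omega>) \<partial>M) = (\<integral>\<omega>. c * ((indicator G \<omega> * k \<omega>) * \<eta>b b \<omega>) \<partial>M)"
    unfolding set_lebesgue_integral_def real_scaleR_def using Z_eq by (rule integral_cong_AE[rotated 2]) simp_all
  also have "\<dots> = c * (\<integral>\<omega>. (indicator G \<omega> * k \<omega>) * \<eta>b a \<omega> \<partial>M)"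
    using martingale_integral_mult_measurable[OF M sub mart(1) \<open>0 \<le> a\<close> \<open>a \<le> b\<close> _ kb_int] by simp
  also have "\<dots> = c * (\<integral>\<omega>\<in>G. \<eta>ab a \<omega> \<partial>M)"
    using integral_cong_AE[OF _ _ k_eq] by (simp add: set_lebesgue_integral_def)
  finally show ?thesis
    unfolding c_def by simp
qed

lemma real_cond_exp_exp_mult_decomp:
  fixes Ka Kb :: "real \<Rightarrow> 'a \<Rightarrow> real"
  assumes M: "prob_space M" and F: "usual_filtration M F"
    and "adapted F Ka" and "adapted F Kb"
    and "\<And>s \<omega>. 0 \<le> s \<Longrightarrow> \<omega> \<in> space M \<Longrightarrow> 0 \<le> Ka s \<omega>"
    and "\<And>s \<omega>. 0 \<le> s \<Longrightarrow> \<omega> \<in> space M \<Longrightarrow> 0 \<le> Kb s \<omega>"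
    and "mult_decomp M F Kb \<Lambda>b \<eta>b"
    and Dab: "mult_decomp M F (\<lambda>s \<omega>. Ka s \<omega> + Kb s \<omega>) \<Lambda>ab \<eta>ab"
    and "0 \<le> t" and "t \<le> a" and "a \<le> b"
  shows "AE \<omega> in M. real_cond_exp M (F t) (\<lambda>\<omega>. exp (- Ka a \<omega> - Kb b \<omega>)) \<omega>
       = exp (- \<Lambda>b b - (\<Lambda>ab a - \<Lambda>b a)) * \<eta>ab t \<omega>"
proof -
  interpret prob_space M by (fact M)
  have sub: "subalgebra M (F t)"
    using F \<open>0 \<le> t\<close> by (rule usual_filtration_subalgebra)
  interpret Ft: sigma_finite_subalgebra M "F t"
    using M sub by (rule prob_space_sigma_finite_subalgebra)
  have "0 \<le> a" and "0 \<le> b"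
    using assms(9-11) by simp_all
  have mart: "martingale M F \<eta>ab"
    using Dab by (simp add: mult_decomp_def)
  then have "integrable M (\<eta>ab t)" and [measurable]: "\<eta>ab t \<in> borel_measurable (F t)"
    using \<open>0 \<le> t\<close> by (simp_all add: martingale_def adapted_def)
  moreover have "integrable M (\<lambda>\<omega>. exp (- Ka a \<omega> - Kb b \<omega>))"
    using assms(3-6) \<open>0 \<le> a\<close> \<open>0 \<le> b\<close>
    by (intro integrable_exp_minus_nonneg adapted_borel_measurable[OF F]) simp_all
  moreover have "(\<integral>\<omega>\<in>G. exp (- Ka a \<omega> - Kb b \<omega>) \<partial>M) = (\<integral>\<omega>\<in>G. exp (- \<Lambda>b b - (\<Lambda>ab a - \<Lambda>b a)) * \<eta>ab t \<omega> \<partial>M)"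
    if G: "G \<in> sets (F t)" for G
  proof -
    have "G \<in> sets (F a)"
      using G usual_filtration_mono[OF F \<open>0 \<le> t\<close> \<open>t \<le> a\<close>] by blast
    then show ?thesis
      using set_integral_exp_mult_decomp[OF assms(1-8) \<open>0 \<le> a\<close> \<open>a \<le> b\<close>]
        martingale_set_integral_eq[OF M sub mart \<open>0 \<le> t\<close> \<open>t \<le> a\<close> G]
      by simp
  qed
  ultimately show ?thesis
    by (intro Ft.real_cond_exp_charact) simp_all
qed

lemma real_cond_exp_survival_indicator:
  fixes K1 K2 :: "real \<Rightarrow> 'a \<Rightarrow> real" and \<Theta>1 \<Theta>2 :: "'a \<Rightarrow> real"
  assumes "prob_space M" and F: "usual_filtration M F"
    and "adapted F K1" and "adapted F K2"
    and K1: "cadlag_increasing_from_0 M K1" and K2: "cadlag_increasing_from_0 M K2"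
    and "distributed M lborel \<Theta>1 (exponential_density 1)"
    and "distributed M lborel \<Theta>2 (exponential_density 1)"
    and indep: "prob_space.indep_sets M
           (\<lambda>i::nat. if i = 0 then F_infty M F
                     else if i = 1 then {\<Theta>1 -` A \<inter> space M | A. A \<in> sets borel}
                     else {\<Theta>2 -` A \<inter> space M | A. A \<in> sets borel}) {0, 1, 2}"
    and "0 \<le> t" and "0 \<le> t1" and "0 \<le> t2"
  shows "AE \<omega> in M.
           real_cond_exp M (F t)
             (indicator {x \<in> space M. hit_time K1 \<Theta>1 x > ereal t1 \<and> hit_time K2 \<Theta>2 x > ereal t2}) \<omega>
         = real_cond_exp M (F t) (\<lambda>\<omega>. exp (- K1 t1 \<omega> - K2 t2 \<omega>)) \<omega>"
proof -
  interpret prob_space M by fact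
  let ?N = "sigma (space M) (F_infty M F)"
  note N = usual_filtration_sigma_F_infty[OF F]
  have "{x \<in> space M. hit_time K1 \<Theta>1 x > ereal t1 \<and> hit_time K2 \<Theta>2 x > ereal t2}
      = {x \<in> space M. K1 t1 x < \<Theta>1 x \<and> K2 t2 x < \<Theta>2 x}"
    using hit_time_gt_iff[OF K1 _ \<open>0 \<le> t1\<close>] hit_time_gt_iff[OF K2 _ \<open>0 \<le> t2\<close>] by blast
  moreover have "indep_sets (\<lambda>i::nat. if i = 0 then sets ?N
      else if i = 1 then {\<Theta>1 -` A \<inter> space M | A. A \<in> sets borel}
      else {\<Theta>2 -` A \<inter> space M | A. A \<in> sets borel}) {0, 1, 2}"
    by (subst N(1)) (rule indep)
  moreover have "K1 t1 \<in> borel_measurable ?N"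
    using assms(3) by (intro measurable_from_subalg[OF N(3)[OF \<open>0 \<le> t1\<close>]]) (simp add: adapted_def \<open>0 \<le> t1\<close>)
  moreover have "K2 t2 \<in> borel_measurable ?N"
    using assms(4) by (intro measurable_from_subalg[OF N(3)[OF \<open>0 \<le> t2\<close>]]) (simp add: adapted_def \<open>0 \<le> t2\<close>)
  ultimately show ?thesis
    using cadlag_increasing_from_0_nonneg[OF K1 _ \<open>0 \<le> t1\<close>] cadlag_increasing_from_0_nonneg[OF K2 _ \<open>0 \<le> t2\<close>]
    by (auto intro!: real_cond_exp_indicator_less_two_exponentials[OF N(2) N(3)[OF \<open>0 \<le> t\<close>] assms(7,8)])
qed

theorem theorem3p1:
  fixes M :: "'a measure" and F :: "real \<Rightarrow> 'a measure"
    and K1 K2 :: "real \<Rightarrow> 'a \<Rightarrow> real" and \<Theta>1 \<Theta>2 :: "'a \<Rightarrow> real"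
    and \<Lambda>1 \<Lambda>2 \<Lambda>12 :: "real \<Rightarrow> real" and \<eta>1 \<eta>2 \<eta>12 :: "real \<Rightarrow> 'a \<Rightarrow> real"
    and t1 t2 t :: real
  assumes "prob_space M"
    and "usual_filtration M F"
    and "adapted F K1" and "adapted F K2"
    and "cadlag_increasing_from_0 M K1" and "cadlag_increasing_from_0 M K2"
    and "distributed M lborel \<Theta>1 (exponential_density 1)"
    and "distributed M lborel \<Theta>2 (exponential_density 1)"
    and "prob_space.indep_sets M
           (\<lambda>i::nat. if i = 0 then F_infty M F
                     else if i = 1 then {\<Theta>1 -` A \<inter> space M | A. A \<in> sets borel}
                     else {\<Theta>2 -` A \<inter> space M | A. A \<in> sets borel}) {0, 1, 2}"
    and "mult_decomp M F K1 \<Lambda>1 \<eta>1"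
    and "mult_decomp M F K2 \<Lambda>2 \<eta>2"
    and "mult_decomp M F (\<lambda>s \<omega>. K1 s \<omega> + K2 s \<omega>) \<Lambda>12 \<eta>12"
    and "0 \<le> t" and "t \<le> min t1 t2"
  shows "AE \<omega> in M.
           real_cond_exp M (F t)
             (indicator {x \<in> space M. hit_time K1 \<Theta>1 x > ereal t1 \<and> hit_time K2 \<Theta>2 x > ereal t2}) \<omega>
           = (if t1 \<le> t2
              then exp (- \<Lambda>2 t2 - (\<Lambda>12 t1 - \<Lambda>2 t1)) * \<eta>12 t \<omega>
              else exp (- \<Lambda>1 t1 - (\<Lambda>12 t2 - \<Lambda>1 t2)) * \<eta>12 t \<omega>)"
proof -
  have t: "0 \<le> t1" "0 \<le> t2" "t \<le> t1" "t \<le> t2"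
    using assms(13,14) by auto
  have K_nonneg: "0 \<le> K1 s \<omega>" "0 \<le> K2 s \<omega>" if "0 \<le> s" "\<omega> \<in> space M" for s \<omega>
    using assms(5,6) that by (simp_all add: cadlag_increasing_from_0_nonneg)
  have survival: "AE \<omega> in M.
      real_cond_exp M (F t)
        (indicator {x \<in> space M. hit_time K1 \<Theta>1 x > ereal t1 \<and> hit_time K2 \<Theta>2 x > ereal t2}) \<omega>
      = real_cond_exp M (F t) (\<lambda>\<omega>. exp (- K1 t1 \<omega> - K2 t2 \<omega>)) \<omega>"
    by (rule real_cond_exp_survival_indicator[OF assms(1-9,13) t(1,2)])
  have "AE \<omega> in M. real_cond_exp M (F t) (\<lambda>\<omega>. exp (- K1 t1 \<omega> - K2 t2 \<omega>)) \<omega>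
      = (if t1 \<le> t2
         then exp (- \<Lambda>2 t2 - (\<Lambda>12 t1 - \<Lambda>2 t1)) * \<eta>12 t \<omega>
         else exp (- \<Lambda>1 t1 - (\<Lambda>12 t2 - \<Lambda>1 t2)) * \<eta>12 t \<omega>)"
  proof (cases "t1 \<le> t2")
    case True
    then show ?thesis
      using real_cond_exp_exp_mult_decomp[OF assms(1-4) K_nonneg assms(11,12,13) t(3)] by simp
  next
    case False
    have "mult_decomp M F (\<lambda>s \<omega>. K2 s \<omega> + K1 s \<omega>) \<Lambda>12 \<eta>12"
      using assms(12) by (simp add: add.commute)
    from real_cond_exp_exp_mult_decomp[OF assms(1,2,4,3) K_nonneg(2,1) assms(10) this assms(13) t(4)] False
    have "AE \<omega> in M. real_cond_exp M (F t) (\<lambda>\<omega>. exp (- K2 t2 \<omega> - K1 t1 \<omega>)) \<omega>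
        = exp (- \<Lambda>1 t1 - (\<Lambda>12 t2 - \<Lambda>1 t2)) * \<eta>12 t \<omega>"
      by simp
    moreover have "(\<lambda>\<omega>. exp (- K2 t2 \<omega> - K1 t1 \<omega>)) = (\<lambda>\<omega>. exp (- K1 t1 \<omega> - K2 t2 \<omega>))"
      by (intro ext arg_cong[where f = exp]) linarith
    ultimately show ?thesis
      using False by simp
  qed
  with survival show ?thesis
    by eventually_elim (rule trans)
qed

end
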